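(* For $n\in\mathbb{N}$, let $f(n)\in\mathbb{N}\cup\{+\infty\}$ denote the largest number (supremum) of pairwise inequivalent nice bases that a real nilpotent Lie algebra of dimension $n$ can carry. Then the function $f\colon\mathbb{N}\to\mathbb{N}\cup\{+\infty\}$ is nondecreasing and unbounded; more precisely, for every $n$, \[f(n)\geq \left\lfloor\frac n6\right\rfloor+1.\]
   Context: Let $\mathfrak{g}$ be a real Lie algebra with basis $\mathcal B=\{e_1,\dots,e_n\}$ and dual basis $\{e^1,\dots,e^n\}$, and let $d$ denote the Chevalley–Eilenberg differential ($de^k(x,y)=-e^k([x,y])$). The basis $\mathcal B$ is called nice if (i) for all $i,j$, $[e_i,e_j]$ is a (possibly zero) multiple of some element of $\mathcal B$, and (ii) for all $i,j$, the contraction $e_i\lrcorner\, de^j$ is a multiple of some element of $\{e^1,\dots,e^n\}$. Two nice bases $\mathcal B_1$ of $\mathfrak{g}_1$ and $\mathcal B_2$ of $\mathfrak{g}_2$ are equivalent if there is a Lie algebra isomorphism $\mathfrak{g}_1\to\mathfrak{g}_2$ mapping each element of $\mathcal B_1$ to a multiple of an element of $\mathcal B_2$. *)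

theory Defs
  imports Complex_Main "HOL-Library.Extended_Nat"
begin

text \<open>Vectors of the n-dimensional real space are modelled as functions
  nat \<Rightarrow> real vanishing outside {..<n}. Vector operations are written pointwise.\<close>

type_synonym vec = "nat \<Rightarrow> real"

definition Vsp :: "nat \<Rightarrow> vec set" where
  "Vsp n = {v. \<forall>i\<ge>n. v i = 0}"

definition vadd :: "vec \<Rightarrow> vec \<Rightarrow> vec" where
  "vadd v w = (\<lambda>i. v i + w i)"

definition vscale :: "real \<Rightarrow> vec \<Rightarrow> vec" where
  "vscale a v = (\<lambda>i. a * v i)"

definition vzero :: vec where
  "vzero = (\<lambda>i. 0)"

definition is_lie_algebra :: "nat \<Rightarrow> (vec \<Rightarrow> vec \<Rightarrow> vec) \<Rightarrow> bool" where
  "is_lie_algebra n br \<longleftrightarrow>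
     (\<forall>x\<in>Vsp n. \<forall>y\<in>Vsp n. br x y \<in> Vsp n) \<and>
     (\<forall>a x y z. x \<in> Vsp n \<longrightarrow> y \<in> Vsp n \<longrightarrow> z \<in> Vsp n \<longrightarrow>
        br (vadd (vscale a x) y) z = vadd (vscale a (br x z)) (br y z) \<and>
        br z (vadd (vscale a x) y) = vadd (vscale a (br z x)) (br z y)) \<and>
     (\<forall>x\<in>Vsp n. br x x = vzero) \<and>
     (\<forall>x\<in>Vsp n. \<forall>y\<in>Vsp n. \<forall>z\<in>Vsp n.
        vadd (vadd (br x (br y z)) (br y (br z x))) (br z (br x y)) = vzero)"

fun nested_br :: "(vec \<Rightarrow> vec \<Rightarrow> vec) \<Rightarrow> vec list \<Rightarrow> vec \<Rightarrow> vec" where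
  "nested_br br [] x = x"
| "nested_br br (y # ys) x = br y (nested_br br ys x)"

text \<open>Nilpotent: some term of the lower central series vanishes, i.e. all
  iterated brackets of a fixed length vanish.\<close>
definition nilpotent_lie :: "nat \<Rightarrow> (vec \<Rightarrow> vec \<Rightarrow> vec) \<Rightarrow> bool" where
  "nilpotent_lie n br \<longleftrightarrow>
     (\<exists>k. \<forall>ys x. length ys = k \<longrightarrow> set ys \<subseteq> Vsp n \<longrightarrow> x \<in> Vsp n \<longrightarrow>
         nested_br br ys x = vzero)"

definition lin_comb :: "nat \<Rightarrow> (nat \<Rightarrow> vec) \<Rightarrow> (nat \<Rightarrow> real) \<Rightarrow> vec" where
  "lin_comb n b a = (\<lambda>j. \<Sum>i<n. a i * b i j)"

definition is_basis :: "nat \<Rightarrow> (nat \<Rightarrow> vec) \<Rightarrow> bool" where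
  "is_basis n b \<longleftrightarrow> (\<forall>i<n. b i \<in> Vsp n) \<and>
     (\<forall>v\<in>Vsp n. \<exists>!a. (\<forall>i\<ge>n. a i = 0) \<and> v = lin_comb n b a)"

definition coord :: "nat \<Rightarrow> (nat \<Rightarrow> vec) \<Rightarrow> nat \<Rightarrow> vec \<Rightarrow> real" where
  "coord n b j v = (THE a. (\<forall>i\<ge>n. a i = 0) \<and> v = lin_comb n b a) j"

text \<open>Nice basis: (i) brackets of basis elements are multiples of basis elements;
  (ii) each contraction e_i \<lrcorner> de^j, i.e. the form x \<mapsto> -e^j([e_i,x]),
  is a multiple of some dual basis element e^k.\<close>
definition nice_basis :: "nat \<Rightarrow> (vec \<Rightarrow> vec \<Rightarrow> vec) \<Rightarrow> (nat \<Rightarrow> vec) \<Rightarrow> bool" where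
  "nice_basis n br b \<longleftrightarrow> is_basis n b \<and>
     (\<forall>i<n. \<forall>j<n. \<exists>k<n. \<exists>c. br (b i) (b j) = vscale c (b k)) \<and>
     (\<forall>i<n. \<forall>j<n. \<exists>k<n. \<exists>c. \<forall>x\<in>Vsp n.
         - coord n b j (br (b i) x) = c * coord n b k x)"

definition lie_iso :: "nat \<Rightarrow> (vec \<Rightarrow> vec \<Rightarrow> vec) \<Rightarrow> (vec \<Rightarrow> vec \<Rightarrow> vec) \<Rightarrow> (vec \<Rightarrow> vec) \<Rightarrow> bool" where
  "lie_iso n br1 br2 \<phi> \<longleftrightarrow> bij_betw \<phi> (Vsp n) (Vsp n) \<and>
     (\<forall>a x y. x \<in> Vsp n \<longrightarrow> y \<in> Vsp n \<longrightarrow> \<phi> (vadd (vscale a x) y) = vadd (vscale a (\<phi> x)) (\<phi> y)) \<and>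
     (\<forall>x\<in>Vsp n. \<forall>y\<in>Vsp n. \<phi> (br1 x y) = br2 (\<phi> x) (\<phi> y))"

definition equiv_nice :: "nat \<Rightarrow> (vec \<Rightarrow> vec \<Rightarrow> vec) \<Rightarrow> (nat \<Rightarrow> vec) \<Rightarrow>
    (vec \<Rightarrow> vec \<Rightarrow> vec) \<Rightarrow> (nat \<Rightarrow> vec) \<Rightarrow> bool" where
  "equiv_nice n br1 b1 br2 b2 \<longleftrightarrow>
     (\<exists>\<phi>. lie_iso n br1 br2 \<phi> \<and> (\<forall>i<n. \<exists>k<n. \<exists>c. \<phi> (b1 i) = vscale c (b2 k)))"

text \<open>f(n): supremum of the number of pairwise inequivalent nice bases of a
  real nilpotent Lie algebra of dimension n (every such algebra is isomorphic to
  one on the model space Vsp n).\<close>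
definition max_nice :: "nat \<Rightarrow> enat" where
  "max_nice n = Sup {enat (card S) | S br.
      is_lie_algebra n br \<and> nilpotent_lie n br \<and> finite S \<and>
      (\<forall>b\<in>S. nice_basis n br b) \<and>
      (\<forall>b1\<in>S. \<forall>b2\<in>S. b1 \<noteq> b2 \<longrightarrow> \<not> equiv_nice n br b1 br b2)}"

end

theory Submission
  imports Defs
begin

text \<open>Monotonicity: adding to a nilpotent Lie algebra an abelian direct factor spanned by a new
  vector \<open>e\<^sub>n\<close>, and adding \<open>e\<^sub>n\<close> to each nice basis, keeps the bases nice and pairwise
  inequivalent. Indeed, an equivalence \<open>\<phi>\<close> of two extended bases exchanges \<open>e\<^sub>n\<close> with a central
  basis vector \<open>w\<close>; restricting \<open>\<phi>\<close> to the original algebra and following it by the retraction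
  that sends \<open>e\<^sub>n\<close> to \<open>w\<close> gives an equivalence of the original bases.

  Lower bound: \<open>h\<^sub>3 \<oplus> h\<^sub>3\<close> (\<open>[e\<^sub>0, e\<^sub>1] = e\<^sub>4\<close>, \<open>[e\<^sub>2, e\<^sub>3] = e\<^sub>5\<close>) has, besides the standard
  one, the nice basis \<open>e\<^sub>0 \<plusminus> e\<^sub>2, e\<^sub>1 \<plusminus> e\<^sub>3, e\<^sub>4 \<plusminus> e\<^sub>5\<close>, in which twice as many pairs of
  basis vectors have a nonzero bracket. In the sum of \<open>k\<close> copies of \<open>h\<^sub>3 \<oplus> h\<^sub>3\<close>, using the second
  basis in the first \<open>j\<close> copies gives \<open>k + 1\<close> nice bases with pairwise different numbers of
  nonzero brackets; this number is invariant under equivalence, so \<open>f(6k) \<ge> k + 1\<close>.\<close>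

lemma vadd_apply [simp]: "vadd v w i = v i + w i"
  by (simp add: vadd_def)

lemma vscale_apply [simp]: "vscale a v i = a * v i"
  by (simp add: vscale_def)

lemma vzero_apply [simp]: "vzero i = 0"
  by (simp add: vzero_def)

lemma vzero_in_Vsp [simp]: "vzero \<in> Vsp n"
  by (simp add: Vsp_def)

lemma vadd_in_Vsp [simp, intro]: "v \<in> Vsp n \<Longrightarrow> w \<in> Vsp n \<Longrightarrow> vadd v w \<in> Vsp n"
  by (simp add: Vsp_def)

lemma vscale_in_Vsp [simp, intro]: "v \<in> Vsp n \<Longrightarrow> vscale c v \<in> Vsp n"
  by (simp add: Vsp_def)

lemma Vsp_Suc: "v \<in> Vsp n \<Longrightarrow> v \<in> Vsp (Suc n)"
  by (simp add: Vsp_def)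

lemma Vsp_vanishes: "v \<in> Vsp n \<Longrightarrow> n \<le> i \<Longrightarrow> v i = 0"
  by (simp add: Vsp_def)

lemma vscale_eq_vzero_iff: "d \<noteq> 0 \<Longrightarrow> vscale d v = vzero \<longleftrightarrow> v = vzero"
  by (auto simp: fun_eq_iff)

lemma lin_comb_in_Vsp: "(\<And>i. i < m \<Longrightarrow> b i \<in> Vsp n) \<Longrightarrow> lin_comb m b a \<in> Vsp n"
  by (auto simp: Vsp_def lin_comb_def intro!: sum.neutral)

lemma lin_comb_Suc: "lin_comb (Suc m) b a = vadd (lin_comb m b a) (vscale (a m) (b m))"
  by (simp add: lin_comb_def fun_eq_iff)

lemma lin_comb_cong:
  "(\<And>i. i < m \<Longrightarrow> a i = a' i) \<Longrightarrow> (\<And>i. i < m \<Longrightarrow> b i = b' i) \<Longrightarrow>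
    lin_comb m b a = lin_comb m b' a'"
  by (auto simp: lin_comb_def fun_eq_iff intro!: sum.cong)

lemma lin_comb_unit:
  assumes "k < m"
  shows "lin_comb m b (\<lambda>i. if i = k then 1 else 0) = b k"
proof (rule ext)
  fix x
  have "(\<Sum>i<m. (if i = k then 1 else 0) * b i x) = (\<Sum>i<m. if i = k then b i x else 0)"
    by (rule sum.cong) auto
  then show "lin_comb m b (\<lambda>i. if i = k then 1 else 0) x = b k x"
    using assms by (simp add: lin_comb_def)
qed

definition linear_form :: "nat \<Rightarrow> (vec \<Rightarrow> real) \<Rightarrow> bool" where
  "linear_form n g \<longleftrightarrow>
     (\<forall>c x y. x \<in> Vsp n \<longrightarrow> y \<in> Vsp n \<longrightarrow> g (vadd (vscale c x) y) = c * g x + g y)"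

definition linear_map :: "nat \<Rightarrow> (vec \<Rightarrow> vec) \<Rightarrow> bool" where
  "linear_map n f \<longleftrightarrow>
     (\<forall>c x y. x \<in> Vsp n \<longrightarrow> y \<in> Vsp n \<longrightarrow> f (vadd (vscale c x) y) = vadd (vscale c (f x)) (f y))"

lemma linear_form_zero:
  assumes "linear_form n g"
  shows "g vzero = 0"
proof -
  have "vadd (vscale 1 vzero) vzero = vzero"
    by (simp add: fun_eq_iff)
  then have "g vzero = g vzero + g vzero"
    using assms vzero_in_Vsp unfolding linear_form_def by (metis mult_1)
  then show ?thesis
    by simp
qed

lemma linear_form_scale:
  assumes "linear_form n g" "x \<in> Vsp n"
  shows "g (vscale c x) = c * g x"
proof -
  have "vadd (vscale c x) vzero = vscale c x"
    by (simp add: fun_eq_iff)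
  then show ?thesis
    using assms linear_form_zero[OF assms(1)] unfolding linear_form_def
    by (metis vzero_in_Vsp add_0_right)
qed

lemma linear_form_lin_comb:
  assumes "linear_form n g" "m \<le> n" "\<And>i. i < n \<Longrightarrow> b i \<in> Vsp n"
  shows "g (lin_comb m b a) = (\<Sum>i<m. a i * g (b i))"
  using assms(2)
proof (induction m)
  case 0
  have "lin_comb 0 b a = vzero"
    by (simp add: lin_comb_def fun_eq_iff)
  then show ?case
    using linear_form_zero[OF assms(1)] by (metis lessThan_0 sum.empty)
next
  case (Suc m)
  have "lin_comb (Suc m) b a = vadd (vscale (a m) (b m)) (lin_comb m b a)"
    by (simp add: lin_comb_Suc fun_eq_iff)
  moreover have "b m \<in> Vsp n" "lin_comb m b a \<in> Vsp n"
    using Suc.prems assms(3) by (auto intro: lin_comb_in_Vsp)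
  ultimately have "g (lin_comb (Suc m) b a) = a m * g (b m) + g (lin_comb m b a)"
    using assms(1) unfolding linear_form_def by simp
  then show ?case
    using Suc by simp
qed

lemma linear_map_component: "linear_map n f \<Longrightarrow> linear_form n (\<lambda>x. f x q)"
  by (simp add: linear_map_def linear_form_def)

lemma linear_map_zero: "linear_map n f \<Longrightarrow> f vzero = vzero"
  using linear_form_zero[OF linear_map_component] by (auto simp: fun_eq_iff)

lemma linear_map_scale: "linear_map n f \<Longrightarrow> x \<in> Vsp n \<Longrightarrow> f (vscale c x) = vscale c (f x)"
  using linear_form_scale[OF linear_map_component] by (auto simp: fun_eq_iff)

lemma linear_map_add:
  assumes "linear_map n f" "x \<in> Vsp n" "y \<in> Vsp n"
  shows "f (vadd x y) = vadd (f x) (f y)"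
proof -
  have "vadd (vscale 1 x) y = vadd x y" "vscale 1 (f x) = f x"
    by (simp_all add: fun_eq_iff)
  then show ?thesis
    using assms unfolding linear_map_def by metis
qed

lemma linear_map_lin_comb:
  assumes "linear_map n f" "m \<le> n" "\<And>i. i < n \<Longrightarrow> b i \<in> Vsp n"
  shows "f (lin_comb m b a) = lin_comb m (\<lambda>i. f (b i)) a"
  using linear_form_lin_comb[OF linear_map_component[OF assms(1)] assms(2,3)]
  by (simp add: fun_eq_iff lin_comb_def)

lemma basis_in_Vsp: "is_basis n b \<Longrightarrow> i < n \<Longrightarrow> b i \<in> Vsp n"
  by (simp add: is_basis_def)

lemma coord_spec:
  assumes "is_basis n b" "v \<in> Vsp n"
  shows "(\<forall>i\<ge>n. coord n b i v = 0) \<and> v = lin_comb n b (\<lambda>i. coord n b i v)"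
proof -
  have "\<exists>!a. (\<forall>i\<ge>n. a i = 0) \<and> v = lin_comb n b a"
    using assms unfolding is_basis_def by blast
  from theI'[OF this] show ?thesis
    unfolding coord_def by simp
qed

lemma basis_expansion: "is_basis n b \<Longrightarrow> v \<in> Vsp n \<Longrightarrow> v = lin_comb n b (\<lambda>i. coord n b i v)"
  using coord_spec by blast

lemma coord_eqI:
  assumes "is_basis n b" "\<forall>i\<ge>n. a i = 0" "v = lin_comb n b a"
  shows "coord n b j v = a j"
proof -
  have "v \<in> Vsp n"
    using assms by (auto intro: lin_comb_in_Vsp basis_in_Vsp)
  then have "\<exists>!a. (\<forall>i\<ge>n. a i = 0) \<and> v = lin_comb n b a"
    using assms(1) unfolding is_basis_def by blast
  then have "(THE a. (\<forall>i\<ge>n. a i = 0) \<and> v = lin_comb n b a) = a"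
    using assms(2,3) by (intro the1_equality) auto
  then show ?thesis
    by (simp add: coord_def)
qed

lemma coord_basis_vector:
  assumes "is_basis n b" "k < n"
  shows "coord n b j (b k) = (if j = k then 1 else 0)"
  using coord_eqI[OF assms(1), of "\<lambda>i. if i = k then 1 else 0" "b k" j] assms(2)
  by (simp add: lin_comb_unit)

lemma coord_linear:
  assumes "is_basis n b"
  shows "linear_form n (coord n b j)"
  unfolding linear_form_def
proof (intro allI impI)
  fix c x y
  assume "x \<in> Vsp n" "y \<in> Vsp n"
  then have "vadd (vscale c x) y =
      vadd (vscale c (lin_comb n b (\<lambda>i. coord n b i x))) (lin_comb n b (\<lambda>i. coord n b i y))"
    using basis_expansion[OF assms] by simp
  also have "\<dots> = lin_comb n b (\<lambda>i. c * coord n b i x + coord n b i y)"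
    by (simp add: lin_comb_def fun_eq_iff sum.distrib sum_distrib_left algebra_simps)
  finally have "vadd (vscale c x) y = lin_comb n b (\<lambda>i. c * coord n b i x + coord n b i y)" .
  then show "coord n b j (vadd (vscale c x) y) = c * coord n b j x + coord n b j y"
    using coord_spec[OF assms] \<open>x \<in> Vsp n\<close> \<open>y \<in> Vsp n\<close> by (subst coord_eqI[OF assms]) auto
qed

lemma basis_nonzero:
  assumes "is_basis n b" "k < n"
  shows "b k \<noteq> vzero"
  using coord_basis_vector[OF assms, of k] linear_form_zero[OF coord_linear[OF assms(1)]] by auto

lemma basis_coord_inject:
  assumes "is_basis n b" "x \<in> Vsp n" "y \<in> Vsp n" "\<And>i. i < n \<Longrightarrow> coord n b i x = coord n b i y"
  shows "x = y"
proof -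
  have "lin_comb n b (\<lambda>i. coord n b i x) = lin_comb n b (\<lambda>i. coord n b i y)"
    using assms(4) by (intro lin_comb_cong) auto
  then show ?thesis
    using basis_expansion[OF assms(1,2)] basis_expansion[OF assms(1,3)] by simp
qed

lemma is_basisI:
  assumes "\<And>i. i < n \<Longrightarrow> b i \<in> Vsp n"
    and "\<And>v. v \<in> Vsp n \<Longrightarrow> (\<forall>i\<ge>n. co v i = 0) \<and> v = lin_comb n b (co v)"
    and "\<And>a. \<forall>i\<ge>n. a i = 0 \<Longrightarrow> co (lin_comb n b a) = a"
  shows "is_basis n b"
  unfolding is_basis_def
proof (intro conjI allI impI ballI)
  fix v
  assume "v \<in> Vsp n"
  then show "\<exists>!a. (\<forall>i\<ge>n. a i = 0) \<and> v = lin_comb n b a"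
    using assms(2,3) by (intro ex1I[of _ "co v"]) auto
qed (use assms(1) in auto)

context
  fixes n br
  assumes lie: "is_lie_algebra n br"
begin

lemma br_in_Vsp: "x \<in> Vsp n \<Longrightarrow> y \<in> Vsp n \<Longrightarrow> br x y \<in> Vsp n"
  using lie by (simp add: is_lie_algebra_def)

lemma br_linear_right: "z \<in> Vsp n \<Longrightarrow> linear_map n (br z)"
  using lie by (simp add: is_lie_algebra_def linear_map_def)

lemma br_linear_left: "z \<in> Vsp n \<Longrightarrow> linear_map n (\<lambda>x. br x z)"
  using lie by (simp add: is_lie_algebra_def linear_map_def)

lemma br_self: "x \<in> Vsp n \<Longrightarrow> br x x = vzero"
  using lie by (simp add: is_lie_algebra_def)

lemma br_zero_left: "z \<in> Vsp n \<Longrightarrow> br vzero z = vzero"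
  using linear_map_zero[OF br_linear_left] by blast

lemma br_zero_right: "z \<in> Vsp n \<Longrightarrow> br z vzero = vzero"
  using linear_map_zero[OF br_linear_right] by blast

lemma br_scale_left: "x \<in> Vsp n \<Longrightarrow> z \<in> Vsp n \<Longrightarrow> br (vscale c x) z = vscale c (br x z)"
  using linear_map_scale[OF br_linear_left] by blast

lemma br_scale_right: "x \<in> Vsp n \<Longrightarrow> z \<in> Vsp n \<Longrightarrow> br z (vscale c x) = vscale c (br z x)"
  using linear_map_scale[OF br_linear_right] by blast

lemma br_add_left:
  "x \<in> Vsp n \<Longrightarrow> y \<in> Vsp n \<Longrightarrow> z \<in> Vsp n \<Longrightarrow> br (vadd x y) z = vadd (br x z) (br y z)"
  using linear_map_add[OF br_linear_left] by blast

lemma br_add_right: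
  "x \<in> Vsp n \<Longrightarrow> y \<in> Vsp n \<Longrightarrow> z \<in> Vsp n \<Longrightarrow> br z (vadd x y) = vadd (br z x) (br z y)"
  using linear_map_add[OF br_linear_right] by blast

lemma br_antisym:
  assumes "x \<in> Vsp n" "y \<in> Vsp n"
  shows "br x y = vscale (-1) (br y x)"
proof -
  have "vzero = br (vadd x y) (vadd x y)"
    using assms by (metis br_self vadd_in_Vsp)
  also have "\<dots> = vadd (vadd (br x x) (br y x)) (vadd (br x y) (br y y))"
    using assms by (simp add: br_add_left br_add_right)
  finally show ?thesis
    using assms by (simp add: br_self fun_eq_iff add_eq_0_iff)
qed

lemma contraction_from_structure_constants:
  assumes basis: "is_basis n b"
    and table: "\<And>l. l < n \<Longrightarrow> t l < n \<and> br (b i) (b l) = vscale (s l) (b (t l))"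
    and "i < n" "x \<in> Vsp n"
  shows "coord n b j (br (b i) x) = (\<Sum>l<n. if t l = j then s l * coord n b l x else 0)"
proof -
  have "linear_form n (\<lambda>x. coord n b j (br (b i) x))"
    using br_linear_right[OF basis_in_Vsp[OF basis \<open>i < n\<close>]] br_in_Vsp basis_in_Vsp[OF basis]
      coord_linear[OF basis, of j] \<open>i < n\<close> unfolding linear_form_def linear_map_def by simp
  then have "coord n b j (br (b i) (lin_comb n b (\<lambda>l. coord n b l x))) =
      (\<Sum>l<n. coord n b l x * coord n b j (br (b i) (b l)))"
    using linear_form_lin_comb basis_in_Vsp[OF basis] by blast
  also have "\<dots> = (\<Sum>l<n. if t l = j then s l * coord n b l x else 0)"
  proof (rule sum.cong)
    fix l
    assume "l \<in> {..<n}"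
    with table[of l] basis show "coord n b l x * coord n b j (br (b i) (b l)) =
        (if t l = j then s l * coord n b l x else 0)"
      by (simp add: linear_form_scale[OF coord_linear] basis_in_Vsp coord_basis_vector)
  qed simp
  finally show ?thesis
    using basis_expansion[OF basis \<open>x \<in> Vsp n\<close>] by simp
qed

text \<open>The contraction \<open>e\<^sub>i \<lrcorner> de\<^sup>j\<close> only involves the \<open>e\<^sup>l\<close> with \<open>t i l = j\<close> and \<open>s i l \<noteq> 0\<close>;
  the injectivity hypothesis leaves at most one of them.\<close>

lemma nice_basis_from_structure_constants:
  assumes basis: "is_basis n b"
    and table: "\<And>i l. i < n \<Longrightarrow> l < n \<Longrightarrow> t i l < n \<and> br (b i) (b l) = vscale (s i l) (b (t i l))"
    and inj: "\<And>i l l'. i < n \<Longrightarrow> l < n \<Longrightarrow> l' < n \<Longrightarrow> s i l \<noteq> 0 \<Longrightarrow> s i l' \<noteq> 0 \<Longrightarrow>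
      t i l = t i l' \<Longrightarrow> l = l'"
  shows "nice_basis n br b"
  unfolding nice_basis_def
proof (intro conjI basis allI impI)
  fix i j
  assume "i < n" "j < n"
  then show "\<exists>k<n. \<exists>c. br (b i) (b j) = vscale c (b k)"
    using table by blast
  have contraction: "coord n b j (br (b i) x) = (\<Sum>l<n. if t i l = j then s i l * coord n b l x else 0)"
    if "x \<in> Vsp n" for x
    using table \<open>i < n\<close> that by (intro contraction_from_structure_constants[OF basis]) auto
  show "\<exists>k<n. \<exists>c. \<forall>x\<in>Vsp n. - coord n b j (br (b i) x) = c * coord n b k x"
  proof (cases "\<exists>k<n. s i k \<noteq> 0 \<and> t i k = j")
    case True
    then obtain k where k: "k < n" "s i k \<noteq> 0" "t i k = j"
      by blast
    have "coord n b j (br (b i) x) = s i k * coord n b k x" if "x \<in> Vsp n" for x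
    proof -
      have "coord n b j (br (b i) x) = (\<Sum>l<n. if l = k then s i k * coord n b k x else 0)"
        unfolding contraction[OF that]
        using inj[OF \<open>i < n\<close> _ k(1) _ k(2)] k(3) by (intro sum.cong) auto
      then show ?thesis
        using k(1) by simp
    qed
    then have "\<forall>x\<in>Vsp n. - coord n b j (br (b i) x) = - s i k * coord n b k x"
      by simp
    then show ?thesis
      using k(1) by blast
  next
    case False
    then have "\<forall>x\<in>Vsp n. - coord n b j (br (b i) x) = 0 * coord n b 0 x"
      by (auto simp: contraction intro!: sum.neutral)
    then show ?thesis
      using \<open>i < n\<close> by (intro exI[of _ 0]) auto
  qed
qed

end

section \<open>An invariant of equivalent nice bases\<close>

lemma lie_iso_linear: "lie_iso n br1 br2 \<phi> \<Longrightarrow> linear_map n \<phi>"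
  by (simp add: lie_iso_def linear_map_def)

lemma lie_iso_hom: "lie_iso n br1 br2 \<phi> \<Longrightarrow> x \<in> Vsp n \<Longrightarrow> y \<in> Vsp n \<Longrightarrow> \<phi> (br1 x y) = br2 (\<phi> x) (\<phi> y)"
  by (simp add: lie_iso_def)

lemma lie_iso_eq_iff:
  "lie_iso n br1 br2 \<phi> \<Longrightarrow> x \<in> Vsp n \<Longrightarrow> y \<in> Vsp n \<Longrightarrow> \<phi> x = \<phi> y \<longleftrightarrow> x = y"
  by (auto simp: lie_iso_def bij_betw_def inj_on_def)

lemma lie_iso_basis_permutation:
  assumes iso: "lie_iso n br1 br2 \<phi>" and basis1: "is_basis n b1" and basis2: "is_basis n b2"
    and maps: "\<And>i. i < n \<Longrightarrow> \<sigma> i < n \<and> \<phi> (b1 i) = vscale (c i) (b2 (\<sigma> i))"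
  shows "(\<forall>i<n. c i \<noteq> 0) \<and> bij_betw \<sigma> {..<n} {..<n}"
proof -
  note lin = lie_iso_linear[OF iso]
  have nonzero: "c i \<noteq> 0" if "i < n" for i
  proof
    assume "c i = 0"
    then have "\<phi> (b1 i) = \<phi> vzero"
      using maps[OF that] linear_map_zero[OF lin] by (simp add: fun_eq_iff)
    then show False
      using lie_iso_eq_iff[OF iso basis_in_Vsp[OF basis1 that] vzero_in_Vsp]
        basis_nonzero[OF basis1 that]
      by simp
  qed
  have "inj_on \<sigma> {..<n}"
  proof (rule inj_onI)
    fix i i'
    assume i: "i \<in> {..<n}" and i': "i' \<in> {..<n}" and "\<sigma> i = \<sigma> i'"
    then have in_Vsp: "b1 i \<in> Vsp n" "b1 i' \<in> Vsp n"
      using basis_in_Vsp[OF basis1] by auto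
    have "\<phi> (vscale (c i') (b1 i)) = \<phi> (vscale (c i) (b1 i'))"
      using maps i i' \<open>\<sigma> i = \<sigma> i'\<close> linear_map_scale[OF lin] in_Vsp by (auto simp: fun_eq_iff)
    then have "vscale (c i') (b1 i) = vscale (c i) (b1 i')"
      using lie_iso_eq_iff[OF iso] in_Vsp by simp
    then have "coord n b1 i (vscale (c i') (b1 i)) = coord n b1 i (vscale (c i) (b1 i'))"
      by simp
    then have "c i' = c i * (if i = i' then 1 else 0)"
      using linear_form_scale[OF coord_linear[OF basis1]] in_Vsp coord_basis_vector[OF basis1] i i'
      by simp
    then show "i = i'"
      using nonzero i' by (auto split: if_splits)
  qed
  moreover have "\<sigma> ` {..<n} = {..<n}"
    using maps by (intro endo_inj_surj[OF _ _ \<open>inj_on \<sigma> {..<n}\<close>]) auto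
  ultimately show ?thesis
    using nonzero by (simp add: bij_betw_def)
qed

lemma equiv_niceE:
  assumes "equiv_nice n br1 b1 br2 b2" "is_basis n b1" "is_basis n b2"
  obtains \<phi> \<sigma> c where "lie_iso n br1 br2 \<phi>"
    and "\<And>i. i < n \<Longrightarrow> \<sigma> i < n \<and> \<phi> (b1 i) = vscale (c i) (b2 (\<sigma> i))"
    and "\<And>i. i < n \<Longrightarrow> c i \<noteq> 0" and "bij_betw \<sigma> {..<n} {..<n}"
proof -
  obtain \<phi> where iso: "lie_iso n br1 br2 \<phi>" and "\<forall>i<n. \<exists>k<n. \<exists>c. \<phi> (b1 i) = vscale c (b2 k)"
    using assms(1) unfolding equiv_nice_def by blast
  then obtain \<sigma> c where maps: "\<And>i. i < n \<Longrightarrow> \<sigma> i < n \<and> \<phi> (b1 i) = vscale (c i) (b2 (\<sigma> i))"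
    by metis
  show ?thesis
    using that[OF iso maps] lie_iso_basis_permutation[OF iso assms(2,3) maps] by blast
qed

definition nonzero_brackets :: "nat \<Rightarrow> (vec \<Rightarrow> vec \<Rightarrow> vec) \<Rightarrow> (nat \<Rightarrow> vec) \<Rightarrow> (nat \<times> nat) set" where
  "nonzero_brackets n br b = {p \<in> {..<n} \<times> {..<n}. br (b (fst p)) (b (snd p)) \<noteq> vzero}"

lemma card_nonzero_brackets_eq:
  assumes lie: "is_lie_algebra n br" and basis1: "is_basis n b1" and basis2: "is_basis n b2"
    and "equiv_nice n br b1 br b2"
  shows "card (nonzero_brackets n br b1) = card (nonzero_brackets n br b2)"
proof -
  obtain \<phi> \<sigma> c where iso: "lie_iso n br br \<phi>"
    and maps: "\<And>i. i < n \<Longrightarrow> \<sigma> i < n \<and> \<phi> (b1 i) = vscale (c i) (b2 (\<sigma> i))"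
    and nonzero: "\<And>i. i < n \<Longrightarrow> c i \<noteq> 0" and bij: "bij_betw \<sigma> {..<n} {..<n}"
    using equiv_niceE[OF assms(4) basis1 basis2] by blast
  have "br (b2 (\<sigma> i)) (b2 (\<sigma> l)) = vzero \<longleftrightarrow> br (b1 i) (b1 l) = vzero" if "i < n" "l < n" for i l
  proof -
    have in_Vsp: "b1 i \<in> Vsp n" "b1 l \<in> Vsp n" "b2 (\<sigma> i) \<in> Vsp n" "b2 (\<sigma> l) \<in> Vsp n"
      using that maps basis_in_Vsp[OF basis1] basis_in_Vsp[OF basis2] by auto
    have "\<phi> (br (b1 i) (b1 l)) = br (vscale (c i) (b2 (\<sigma> i))) (vscale (c l) (b2 (\<sigma> l)))"
      using lie_iso_hom[OF iso] in_Vsp maps that by simp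
    also have "\<dots> = vscale (c i * c l) (br (b2 (\<sigma> i)) (b2 (\<sigma> l)))"
      using in_Vsp by (simp add: br_scale_left[OF lie] br_scale_right[OF lie] fun_eq_iff)
    finally have "br (b1 i) (b1 l) = vzero \<longleftrightarrow> vscale (c i * c l) (br (b2 (\<sigma> i)) (b2 (\<sigma> l))) = vzero"
      using lie_iso_eq_iff[OF iso br_in_Vsp[OF lie in_Vsp(1,2)] vzero_in_Vsp]
        linear_map_zero[OF lie_iso_linear[OF iso]] by metis
    then show ?thesis
      using nonzero that by (simp add: vscale_eq_vzero_iff)
  qed
  then have "bij_betw (map_prod \<sigma> \<sigma>) (nonzero_brackets n br b1) (nonzero_brackets n br b2)"
    unfolding nonzero_brackets_def by (intro bij_betw_Collect bij_betw_map_prod bij) auto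
  then show ?thesis
    by (rule bij_betw_same_card)
qed

section \<open>Adding an abelian direct factor\<close>

definition trunc :: "nat \<Rightarrow> vec \<Rightarrow> vec" where
  "trunc n x = (\<lambda>q. if q < n then x q else 0)"

definition unit_vec :: "nat \<Rightarrow> vec" where
  "unit_vec n = (\<lambda>q. if q = n then 1 else 0)"

text \<open>\<open>ext_br n br\<close> is the direct sum of \<open>br\<close> with the abelian line spanned by \<open>unit_vec n\<close>.\<close>

definition ext_br :: "nat \<Rightarrow> (vec \<Rightarrow> vec \<Rightarrow> vec) \<Rightarrow> vec \<Rightarrow> vec \<Rightarrow> vec" where
  "ext_br n br x y = br (trunc n x) (trunc n y)"

definition ext_basis :: "nat \<Rightarrow> (nat \<Rightarrow> vec) \<Rightarrow> nat \<Rightarrow> vec" where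
  "ext_basis n b i = (if i < n then b i else unit_vec n)"

lemma trunc_in_Vsp [simp]: "trunc n x \<in> Vsp n"
  by (simp add: trunc_def Vsp_def)

lemma trunc_id: "x \<in> Vsp n \<Longrightarrow> trunc n x = x"
  by (auto simp: trunc_def Vsp_def fun_eq_iff)

lemma trunc_unit_vec [simp]: "trunc n (unit_vec n) = vzero"
  by (simp add: trunc_def unit_vec_def fun_eq_iff)

lemma unit_vec_in_Vsp [simp]: "unit_vec n \<in> Vsp (Suc n)"
  by (simp add: unit_vec_def Vsp_def)

lemma trunc_add_last:
  assumes "v \<in> Vsp (Suc n)"
  shows "vadd (trunc n v) (vscale (v n) (unit_vec n)) = v"
  using assms by (auto simp: trunc_def unit_vec_def Vsp_def fun_eq_iff)

lemma lin_comb_ext_basis: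
  "lin_comb (Suc n) (ext_basis n b) a = vadd (lin_comb n b a) (vscale (a n) (unit_vec n))"
proof -
  have "lin_comb n (ext_basis n b) a = lin_comb n b a"
    by (rule lin_comb_cong) (simp_all add: ext_basis_def)
  then show ?thesis
    by (simp add: lin_comb_Suc ext_basis_def)
qed

context
  fixes n br
  assumes lie: "is_lie_algebra n br"
begin

lemma ext_br_in_Vsp: "ext_br n br x y \<in> Vsp n"
  by (simp add: ext_br_def br_in_Vsp[OF lie])

lemma ext_br_unit_vec_left: "ext_br n br (unit_vec n) x = vzero"
  unfolding ext_br_def trunc_unit_vec by (rule br_zero_left[OF lie trunc_in_Vsp])

lemma ext_br_unit_vec_right: "ext_br n br x (unit_vec n) = vzero"
  unfolding ext_br_def trunc_unit_vec by (rule br_zero_right[OF lie trunc_in_Vsp])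

lemma ext_lie: "is_lie_algebra (Suc n) (ext_br n br)"
  unfolding is_lie_algebra_def
proof (intro conjI ballI allI impI)
  fix x y
  show "ext_br n br x y \<in> Vsp (Suc n)"
    by (rule Vsp_Suc[OF ext_br_in_Vsp])
next
  fix a x y z
  have "trunc n (vadd (vscale a x) y) = vadd (vscale a (trunc n x)) (trunc n y)"
    by (simp add: trunc_def fun_eq_iff)
  then show "ext_br n br (vadd (vscale a x) y) z = vadd (vscale a (ext_br n br x z)) (ext_br n br y z)"
    and "ext_br n br z (vadd (vscale a x) y) = vadd (vscale a (ext_br n br z x)) (ext_br n br z y)"
    using br_linear_left[OF lie] br_linear_right[OF lie] unfolding ext_br_def linear_map_def by simp_all
next
  fix x
  show "ext_br n br x x = vzero"
    by (metis ext_br_def br_self[OF lie] trunc_in_Vsp)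
next
  fix x y z
  have "ext_br n br u (ext_br n br v w) = br (trunc n u) (br (trunc n v) (trunc n w))" for u v w
    by (simp add: ext_br_def trunc_id br_in_Vsp[OF lie])
  then show "vadd (vadd (ext_br n br x (ext_br n br y z)) (ext_br n br y (ext_br n br z x)))
      (ext_br n br z (ext_br n br x y)) = vzero"
    using lie unfolding is_lie_algebra_def by simp
qed

lemma trunc_nested_ext_br:
  "trunc n (nested_br (ext_br n br) ys x) = nested_br br (map (trunc n) ys) (trunc n x)"
proof (induction ys)
  case (Cons y ys)
  have "trunc n (nested_br (ext_br n br) (y # ys) x) =
      br (trunc n y) (trunc n (nested_br (ext_br n br) ys x))"
    by (simp add: ext_br_def trunc_id br_in_Vsp[OF lie])
  then show ?case
    using Cons.IH by simp
qed simp

lemma ext_nilpotent: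
  assumes "nilpotent_lie n br"
  shows "nilpotent_lie (Suc n) (ext_br n br)"
proof -
  obtain k where k: "\<forall>ys x. length ys = k \<longrightarrow> set ys \<subseteq> Vsp n \<longrightarrow> x \<in> Vsp n \<longrightarrow> nested_br br ys x = vzero"
    using assms unfolding nilpotent_lie_def by blast
  have "nested_br (ext_br n br) (y # ys) x = vzero" if "length ys = k" for y ys x
  proof -
    have "nested_br (ext_br n br) (y # ys) x =
        br (trunc n y) (nested_br br (map (trunc n) ys) (trunc n x))"
      by (simp add: ext_br_def trunc_nested_ext_br)
    also have "nested_br br (map (trunc n) ys) (trunc n x) = vzero"
      using k[rule_format, of "map (trunc n) ys" "trunc n x"] that by (auto simp: image_subset_iff)
    finally show ?thesis
      by (metis br_zero_right[OF lie] trunc_in_Vsp)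
  qed
  then show ?thesis
    unfolding nilpotent_lie_def by (metis length_Suc_conv)
qed

end

definition ext_coords :: "nat \<Rightarrow> (nat \<Rightarrow> vec) \<Rightarrow> vec \<Rightarrow> nat \<Rightarrow> real" where
  "ext_coords n b v i = (if i < n then coord n b i (trunc n v) else if i = n then v n else 0)"

context
  fixes n b
  assumes basis: "is_basis n b"
begin

lemma lin_comb_ext_coords:
  assumes "v \<in> Vsp (Suc n)"
  shows "lin_comb (Suc n) (ext_basis n b) (ext_coords n b v) = v"
proof -
  have "lin_comb n b (ext_coords n b v) = lin_comb n b (\<lambda>i. coord n b i (trunc n v))"
    by (rule lin_comb_cong) (simp_all add: ext_coords_def)
  also have "\<dots> = trunc n v"
    using basis_expansion[OF basis trunc_in_Vsp] by simp
  finally show ?thesis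
    using trunc_add_last[OF assms] by (simp add: lin_comb_ext_basis ext_coords_def)
qed

lemma ext_coords_lin_comb:
  assumes "\<forall>i\<ge>Suc n. a i = 0"
  shows "ext_coords n b (lin_comb (Suc n) (ext_basis n b) a) = a"
proof
  fix i
  have in_Vsp: "lin_comb n b a \<in> Vsp n"
    using basis_in_Vsp[OF basis] by (rule lin_comb_in_Vsp)
  then have "trunc n (lin_comb (Suc n) (ext_basis n b) a) = lin_comb n b a"
    by (auto simp: lin_comb_ext_basis trunc_def unit_vec_def Vsp_def fun_eq_iff)
  also have "\<dots> = lin_comb n b (a(n := 0))"
    by (rule lin_comb_cong) auto
  moreover have "lin_comb (Suc n) (ext_basis n b) a n = a n"
    using in_Vsp by (simp add: lin_comb_ext_basis unit_vec_def Vsp_def)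
  moreover have "coord n b i (lin_comb n b (a(n := 0))) = a i" if "i < n"
    using coord_eqI[OF basis, of "a(n := 0)" "lin_comb n b (a(n := 0))" i] assms that
    by (auto simp: le_Suc_eq)
  ultimately show "ext_coords n b (lin_comb (Suc n) (ext_basis n b) a) i = a i"
    using assms by (simp add: ext_coords_def not_less_eq)
qed

lemma ext_is_basis: "is_basis (Suc n) (ext_basis n b)"
proof (rule is_basisI[where co = "ext_coords n b"])
  show "ext_basis n b i \<in> Vsp (Suc n)" if "i < Suc n" for i
    using basis_in_Vsp[OF basis] by (simp add: ext_basis_def Vsp_Suc)
next
  fix v
  assume "v \<in> Vsp (Suc n)"
  moreover have "\<forall>i\<ge>Suc n. ext_coords n b v i = 0"
    by (simp add: ext_coords_def)
  ultimately show "(\<forall>i\<ge>Suc n. ext_coords n b v i = 0) \<and>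
      v = lin_comb (Suc n) (ext_basis n b) (ext_coords n b v)"
    using lin_comb_ext_coords by simp
qed (rule ext_coords_lin_comb)

lemma coord_ext_basis: "v \<in> Vsp (Suc n) \<Longrightarrow> coord (Suc n) (ext_basis n b) j v = ext_coords n b v j"
  using coord_eqI[OF ext_is_basis, of "ext_coords n b v" v j] lin_comb_ext_coords
  by (simp add: ext_coords_def)

end

context
  fixes n br b
  assumes lie: "is_lie_algebra n br" and basis: "is_basis n b"
begin

lemma ext_br_ext_basis:
  "ext_br n br (ext_basis n b i) x = (if i < n then br (b i) (trunc n x) else vzero)"
proof (cases "i < n")
  case True
  then show ?thesis
    using basis_in_Vsp[OF basis] by (simp add: ext_br_def ext_basis_def trunc_id)
next
  case False
  then show ?thesis
    by (simp add: ext_basis_def ext_br_unit_vec_left[OF lie])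
qed

lemma coord_ext_br_ext_basis:
  "coord (Suc n) (ext_basis n b) j (ext_br n br (ext_basis n b i) x) =
    (if i < n \<and> j < n then coord n b j (br (b i) (trunc n x)) else 0)"
proof -
  have "ext_br n br (ext_basis n b i) x \<in> Vsp n"
    by (rule ext_br_in_Vsp[OF lie])
  then have "coord (Suc n) (ext_basis n b) j (ext_br n br (ext_basis n b i) x) =
      (if j < n then coord n b j (ext_br n br (ext_basis n b i) x) else 0)"
    by (simp add: coord_ext_basis[OF basis Vsp_Suc] ext_coords_def trunc_id Vsp_vanishes)
  then show ?thesis
    using linear_form_zero[OF coord_linear[OF basis]] by (simp add: ext_br_ext_basis)
qed

end

lemma ext_nice_basis:
  assumes lie: "is_lie_algebra n br" and nice: "nice_basis n br b"
  shows "nice_basis (Suc n) (ext_br n br) (ext_basis n b)"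
proof -
  have basis: "is_basis n b"
    using nice by (simp add: nice_basis_def)
  note bracket = ext_br_ext_basis[OF lie basis]
  note contraction = coord_ext_br_ext_basis[OF lie basis]
  show ?thesis
    unfolding nice_basis_def
  proof (intro conjI allI impI ext_is_basis[OF basis])
    fix i j
    assume "i < Suc n" "j < Suc n"
    show "\<exists>k<Suc n. \<exists>c. ext_br n br (ext_basis n b i) (ext_basis n b j) = vscale c (ext_basis n b k)"
    proof (cases "i < n \<and> j < n")
      case True
      then obtain k c where "k < n" "br (b i) (b j) = vscale c (b k)"
        using nice unfolding nice_basis_def by blast
      then have "ext_br n br (ext_basis n b i) (ext_basis n b j) = vscale c (ext_basis n b k)"
        using True basis_in_Vsp[OF basis] by (simp add: ext_br_def ext_basis_def trunc_id fun_eq_iff)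
      then show ?thesis
        using \<open>k < n\<close> less_SucI by blast
    next
      case False
      then have "ext_br n br (ext_basis n b i) (ext_basis n b j) = vzero"
        by (auto simp: ext_basis_def ext_br_unit_vec_left[OF lie] ext_br_unit_vec_right[OF lie])
      then show ?thesis
        by (intro exI[of _ 0]) (simp add: fun_eq_iff)
    qed
    show "\<exists>k<Suc n. \<exists>c. \<forall>x\<in>Vsp (Suc n).
        - coord (Suc n) (ext_basis n b) j (ext_br n br (ext_basis n b i) x) =
          c * coord (Suc n) (ext_basis n b) k x"
    proof (cases "i < n \<and> j < n")
      case True
      then obtain k c where "k < n" and k: "\<forall>x\<in>Vsp n. - coord n b j (br (b i) x) = c * coord n b k x"
        using nice unfolding nice_basis_def by blast
      then have "\<forall>x\<in>Vsp (Suc n). - coord (Suc n) (ext_basis n b) j (ext_br n br (ext_basis n b i) x) =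
          c * coord (Suc n) (ext_basis n b) k x"
        using True by (simp add: contraction coord_ext_basis[OF basis] ext_coords_def)
      then show ?thesis
        using \<open>k < n\<close> less_SucI by blast
    next
      case False
      then show ?thesis
        by (intro exI[of _ 0]) (auto simp: contraction)
    qed
  qed
qed

lemma bij_betw_skip_last:
  assumes "bij_betw \<sigma> {..<Suc n} {..<Suc n}"
  shows "bij_betw (\<lambda>i. if \<sigma> i = n then \<sigma> n else \<sigma> i) {..<n} {..<n}"
proof -
  let ?\<pi> = "\<lambda>i. if \<sigma> i = n then \<sigma> n else \<sigma> i"
  have inj: "\<sigma> i = \<sigma> i' \<Longrightarrow> i < Suc n \<Longrightarrow> i' < Suc n \<Longrightarrow> i = i'" for i i'
    using assms by (auto simp: bij_betw_def inj_on_def)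
  have less: "\<sigma> i < Suc n" if "i < Suc n" for i
    using assms that by (auto simp: bij_betw_def)
  have \<pi>_less: "?\<pi> i < n" if "i < n" for i
  proof (cases "\<sigma> i = n")
    case True
    then have "\<sigma> n \<noteq> n"
      using inj[of i n] that by auto
    then show ?thesis
      using True less[of n] by simp
  next
    case False
    then show ?thesis
      using less[of i] that by simp
  qed
  have image: "?\<pi> ` {..<n} \<subseteq> {..<n}"
    using \<pi>_less unfolding image_subset_iff lessThan_iff by blast
  have inj_\<pi>: "inj_on ?\<pi> {..<n}"
  proof (rule inj_onI)
    fix i i'
    assume "i \<in> {..<n}" "i' \<in> {..<n}" "?\<pi> i = ?\<pi> i'"
    then show "i = i'"
      using inj[of i i'] inj[of n i'] inj[of i n] by (auto split: if_splits)
  qed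
  show ?thesis
    unfolding bij_betw_def by (intro conjI inj_\<pi> endo_inj_surj[OF finite_lessThan image inj_\<pi>])
qed

context
  fixes n \<psi> b1 b2 d \<pi>
  assumes lin: "linear_map n \<psi>" and basis1: "is_basis n b1" and basis2: "is_basis n b2"
    and maps: "\<And>i. i < n \<Longrightarrow> \<psi> (b1 i) = vscale (d i) (b2 (\<pi> i))"
    and perm: "bij_betw \<pi> {..<n} {..<n}"
begin

lemma scaled_basis_image_expansion:
  assumes "x \<in> Vsp n"
  shows "\<psi> x = lin_comb n (\<lambda>i. vscale (d i) (b2 (\<pi> i))) (\<lambda>i. coord n b1 i x)"
proof -
  have "\<psi> x = \<psi> (lin_comb n b1 (\<lambda>i. coord n b1 i x))"
    using basis_expansion[OF basis1 assms] by (rule arg_cong)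
  also have "\<dots> = lin_comb n (\<lambda>i. \<psi> (b1 i)) (\<lambda>i. coord n b1 i x)"
    by (rule linear_map_lin_comb[OF lin order_refl basis_in_Vsp[OF basis1]])
  also have "\<dots> = lin_comb n (\<lambda>i. vscale (d i) (b2 (\<pi> i))) (\<lambda>i. coord n b1 i x)"
    using maps by (intro lin_comb_cong) auto
  finally show ?thesis .
qed

lemma scaled_basis_image_in_Vsp: "x \<in> Vsp n \<Longrightarrow> \<psi> x \<in> Vsp n"
  using perm basis_in_Vsp[OF basis2] by (auto simp: scaled_basis_image_expansion bij_betw_def
      intro!: lin_comb_in_Vsp)

lemma coord_scaled_basis_image:
  assumes "x \<in> Vsp n" "i < n"
  shows "coord n b2 (\<pi> i) (\<psi> x) = d i * coord n b1 i x"
proof -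
  have in_Vsp: "vscale (d l) (b2 (\<pi> l)) \<in> Vsp n" if "l < n" for l
    using perm that basis_in_Vsp[OF basis2] by (auto simp: bij_betw_def)
  have "coord n b2 (\<pi> i) (\<psi> x) = (\<Sum>l<n. coord n b1 l x * coord n b2 (\<pi> i) (vscale (d l) (b2 (\<pi> l))))"
    unfolding scaled_basis_image_expansion[OF assms(1)]
    by (rule linear_form_lin_comb[OF coord_linear[OF basis2] order_refl in_Vsp])
  also have "\<dots> = (\<Sum>l<n. if l = i then d i * coord n b1 i x else 0)"
  proof (rule sum.cong)
    fix l
    assume "l \<in> {..<n}"
    then have "\<pi> l < n" "\<pi> i = \<pi> l \<longleftrightarrow> l = i"
      using perm assms(2) by (auto simp: bij_betw_def inj_on_def)
    then show "coord n b1 l x * coord n b2 (\<pi> i) (vscale (d l) (b2 (\<pi> l))) =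
        (if l = i then d i * coord n b1 i x else 0)"
      by (simp add: linear_form_scale[OF coord_linear[OF basis2] basis_in_Vsp[OF basis2]]
          coord_basis_vector[OF basis2])
  qed simp
  finally show ?thesis
    using assms(2) by simp
qed

lemma bij_betw_scaled_basis_image:
  assumes nonzero: "\<And>i. i < n \<Longrightarrow> d i \<noteq> 0"
  shows "bij_betw \<psi> (Vsp n) (Vsp n)"
proof -
  have "inj_on \<psi> (Vsp n)"
  proof (rule inj_onI)
    fix x y
    assume "x \<in> Vsp n" "y \<in> Vsp n" "\<psi> x = \<psi> y"
    have "d i * coord n b1 i x = d i * coord n b1 i y" if "i < n" for i
    proof -
      have "d i * coord n b1 i x = coord n b2 (\<pi> i) (\<psi> x)"
        by (rule coord_scaled_basis_image[OF \<open>x \<in> Vsp n\<close> that, symmetric])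
      also have "\<dots> = d i * coord n b1 i y"
        unfolding \<open>\<psi> x = \<psi> y\<close> by (rule coord_scaled_basis_image[OF \<open>y \<in> Vsp n\<close> that])
      finally show ?thesis .
    qed
    then show "x = y"
      using nonzero \<open>x \<in> Vsp n\<close> \<open>y \<in> Vsp n\<close> by (intro basis_coord_inject[OF basis1]) auto
  qed
  moreover have "v \<in> \<psi> ` Vsp n" if "v \<in> Vsp n" for v
  proof -
    define x where "x = lin_comb n b1 (\<lambda>i. if i < n then coord n b2 (\<pi> i) v / d i else 0)"
    have x: "x \<in> Vsp n"
      unfolding x_def by (rule lin_comb_in_Vsp) (rule basis_in_Vsp[OF basis1])
    have "coord n b2 k (\<psi> x) = coord n b2 k v" if "k < n" for k
    proof -
      obtain i where "i < n" "k = \<pi> i"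
        using perm \<open>k < n\<close> by (auto simp: bij_betw_def)
      moreover have "coord n b1 i x = coord n b2 (\<pi> i) v / d i"
        using coord_eqI[OF basis1 _ x_def, of i] \<open>i < n\<close> by simp
      ultimately show ?thesis
        using coord_scaled_basis_image[OF x \<open>i < n\<close>] nonzero[OF \<open>i < n\<close>] by simp
    qed
    then have "\<psi> x = v"
      by (rule basis_coord_inject[OF basis2 scaled_basis_image_in_Vsp[OF x] that])
    then show ?thesis
      using x by blast
  qed
  ultimately show ?thesis
    using scaled_basis_image_in_Vsp by (auto simp: bij_betw_def)
qed

end

lemma lie_iso_central:
  assumes iso: "lie_iso n br1 br2 \<phi>" and "z \<in> Vsp n" and central: "\<forall>u\<in>Vsp n. br1 z u = vzero"
    and "u \<in> Vsp n"
  shows "br2 (\<phi> z) u = vzero"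
proof -
  obtain u' where "u' \<in> Vsp n" "u = \<phi> u'"
    using iso \<open>u \<in> Vsp n\<close> unfolding lie_iso_def bij_betw_def by (metis imageE)
  then have "br2 (\<phi> z) u = \<phi> (br1 z u')"
    using lie_iso_hom[OF iso \<open>z \<in> Vsp n\<close>] by simp
  also have "\<dots> = vzero"
    using central \<open>u' \<in> Vsp n\<close> linear_map_zero[OF lie_iso_linear[OF iso]] by simp
  finally show ?thesis .
qed

definition retract :: "nat \<Rightarrow> vec \<Rightarrow> vec \<Rightarrow> vec" where
  "retract n w v = vadd (trunc n v) (vscale (v n) w)"

lemma retract_vadd: "retract n w (vadd x y) = vadd (retract n w x) (retract n w y)"
  by (simp add: retract_def trunc_def fun_eq_iff algebra_simps)

lemma retract_vscale: "retract n w (vscale c x) = vscale c (retract n w x)"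
  by (simp add: retract_def trunc_def fun_eq_iff algebra_simps)

lemma retract_id: "v \<in> Vsp n \<Longrightarrow> retract n w v = v"
  by (simp add: retract_def trunc_id Vsp_vanishes fun_eq_iff)

lemma retract_unit_vec: "retract n w (unit_vec n) = w"
  by (simp add: retract_def trunc_def unit_vec_def fun_eq_iff)

lemma retract_hom:
  assumes lie: "is_lie_algebra n br" and "w \<in> Vsp n" and central: "\<forall>u\<in>Vsp n. br w u = vzero"
  shows "retract n w (ext_br n br x y) = br (retract n w x) (retract n w y)"
proof -
  have central': "br u w = vzero" if "u \<in> Vsp n" for u
    using br_antisym[OF lie that \<open>w \<in> Vsp n\<close>] central that by (simp add: fun_eq_iff)
  have "br (retract n w x) (retract n w y) = br (trunc n x) (trunc n y)"
    using \<open>w \<in> Vsp n\<close> central central'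
    by (simp add: retract_def br_add_left[OF lie] br_add_right[OF lie] br_scale_left[OF lie]
        br_scale_right[OF lie] br_in_Vsp[OF lie] fun_eq_iff)
  moreover have "retract n w (ext_br n br x y) = ext_br n br x y"
    by (rule retract_id[OF ext_br_in_Vsp[OF lie]])
  ultimately show ?thesis
    by (simp add: ext_br_def)
qed

lemma ext_iso_unit_vec_central:
  assumes lie: "is_lie_algebra n br" and iso: "lie_iso (Suc n) (ext_br n br) (ext_br n br) \<phi>"
    and "\<phi> (unit_vec n) = vscale c v" "c \<noteq> 0" "v \<in> Vsp n" "u \<in> Vsp n"
  shows "br v u = vzero"
proof -
  have "vzero = ext_br n br (\<phi> (unit_vec n)) u"
    using lie_iso_central[OF iso unit_vec_in_Vsp _ Vsp_Suc[OF \<open>u \<in> Vsp n\<close>]]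
      ext_br_unit_vec_left[OF lie] by metis
  also have "\<dots> = br (vscale c v) u"
    using assms(3,5,6) by (simp add: ext_br_def trunc_id)
  also have "\<dots> = vscale c (br v u)"
    by (rule br_scale_left[OF lie \<open>v \<in> Vsp n\<close> \<open>u \<in> Vsp n\<close>])
  finally show ?thesis
    using \<open>c \<noteq> 0\<close> vscale_eq_vzero_iff by metis
qed

lemma equiv_nice_of_ext_equiv:
  assumes lie: "is_lie_algebra n br" and basis1: "is_basis n b1" and basis2: "is_basis n b2"
    and "equiv_nice (Suc n) (ext_br n br) (ext_basis n b1) (ext_br n br) (ext_basis n b2)"
  shows "equiv_nice n br b1 br b2"
proof -
  obtain \<phi> \<sigma> c where iso: "lie_iso (Suc n) (ext_br n br) (ext_br n br) \<phi>"
    and maps: "\<And>i. i < Suc n \<Longrightarrow> \<sigma> i < Suc n \<and> \<phi> (ext_basis n b1 i) = vscale (c i) (ext_basis n b2 (\<sigma> i))"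
    and nonzero: "\<And>i. i < Suc n \<Longrightarrow> c i \<noteq> 0" and perm: "bij_betw \<sigma> {..<Suc n} {..<Suc n}"
    using equiv_niceE[OF assms(4) ext_is_basis[OF basis1] ext_is_basis[OF basis2]] by blast
  have \<sigma>_eq_iff: "\<sigma> i = \<sigma> n \<longleftrightarrow> i = n" if "i < Suc n" for i
    using perm that by (auto simp: bij_betw_def inj_on_def)
  define w where "w = (if \<sigma> n < n then b2 (\<sigma> n) else vzero)"
  have w: "w \<in> Vsp n"
    using basis_in_Vsp[OF basis2] by (simp add: w_def)
  have central: "\<forall>u\<in>Vsp n. br w u = vzero"
  proof (cases "\<sigma> n < n")
    case True
    then have "\<phi> (unit_vec n) = vscale (c n) (b2 (\<sigma> n))"
      using maps[of n] by (simp add: ext_basis_def)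
    then show ?thesis
      using True nonzero[of n] basis_in_Vsp[OF basis2 True] ext_iso_unit_vec_central[OF lie iso]
      by (simp add: w_def)
  qed (simp add: w_def br_zero_left[OF lie])
  define \<psi> where "\<psi> x = retract n w (\<phi> x)" for x
  define \<pi> where "\<pi> i = (if \<sigma> i = n then \<sigma> n else \<sigma> i)" for i
  have lin: "linear_map n \<psi>"
    using lie_iso_linear[OF iso] unfolding linear_map_def \<psi>_def
    by (simp add: Vsp_Suc retract_vadd retract_vscale)
  have hom: "\<psi> (br x y) = br (\<psi> x) (\<psi> y)" if "x \<in> Vsp n" "y \<in> Vsp n" for x y
  proof -
    have "br x y = ext_br n br x y"
      using that by (simp add: ext_br_def trunc_id)
    then show ?thesis
      using lie_iso_hom[OF iso Vsp_Suc[OF that(1)] Vsp_Suc[OF that(2)]] retract_hom[OF lie w central]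
      by (simp add: \<psi>_def)
  qed
  have \<psi>_basis: "\<psi> (b1 i) = vscale (c i) (b2 (\<pi> i))" if "i < n" for i
  proof (cases "\<sigma> i = n")
    case True
    then have "\<sigma> n < n"
      using \<sigma>_eq_iff[of i] maps[of n] that by (simp add: less_Suc_eq)
    then show ?thesis
      using maps[of i] that True
      by (simp add: \<psi>_def \<pi>_def ext_basis_def w_def retract_vscale retract_unit_vec)
  next
    case False
    then have "\<sigma> i < n"
      using maps[of i] that by simp
    then show ?thesis
      using maps[of i] that False basis_in_Vsp[OF basis2]
      by (simp add: \<psi>_def \<pi>_def ext_basis_def retract_id)
  qed
  have "bij_betw \<pi> {..<n} {..<n}"
    unfolding \<pi>_def by (rule bij_betw_skip_last[OF perm])
  then have "bij_betw \<psi> (Vsp n) (Vsp n)"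
    using bij_betw_scaled_basis_image[OF lin basis1 basis2 \<psi>_basis] nonzero by simp
  then have "lie_iso n br br \<psi>"
    using lin hom unfolding lie_iso_def linear_map_def by blast
  moreover have "\<pi> i < n" if "i < n" for i
    using \<open>bij_betw \<pi> {..<n} {..<n}\<close> that by (auto simp: bij_betw_def)
  ultimately show ?thesis
    unfolding equiv_nice_def using \<psi>_basis by blast
qed

lemma equiv_nice_if_agree:
  assumes "\<And>i. i < n \<Longrightarrow> b1 i = b2 i"
  shows "equiv_nice n br b1 br b2"
proof -
  have "lie_iso n br br id"
    by (simp add: lie_iso_def)
  moreover have "id (b1 i) = vscale 1 (b2 i)" if "i < n" for i
    using assms that by (simp add: fun_eq_iff)
  ultimately show ?thesis
    unfolding equiv_nice_def by blast
qed

lemma inj_on_ext_basis: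
  assumes "\<forall>b1\<in>S. \<forall>b2\<in>S. b1 \<noteq> b2 \<longrightarrow> \<not> equiv_nice n br b1 br b2"
  shows "inj_on (ext_basis n) S"
proof (rule inj_onI)
  fix b1 b2
  assume "b1 \<in> S" "b2 \<in> S" and eq: "ext_basis n b1 = ext_basis n b2"
  have "b1 i = b2 i" if "i < n" for i
    using fun_cong[OF eq, of i] that by (simp add: ext_basis_def)
  then have "equiv_nice n br b1 br b2"
    by (rule equiv_nice_if_agree)
  then show "b1 = b2"
    using assms \<open>b1 \<in> S\<close> \<open>b2 \<in> S\<close> by blast
qed

lemma ext_basis_pairwise_inequiv:
  assumes lie: "is_lie_algebra n br" and nice: "\<forall>b\<in>S. nice_basis n br b"
    and inequiv: "\<forall>b1\<in>S. \<forall>b2\<in>S. b1 \<noteq> b2 \<longrightarrow> \<not> equiv_nice n br b1 br b2"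
  shows "\<forall>b1'\<in>ext_basis n ` S. \<forall>b2'\<in>ext_basis n ` S. b1' \<noteq> b2' \<longrightarrow>
    \<not> equiv_nice (Suc n) (ext_br n br) b1' (ext_br n br) b2'"
proof (intro ballI impI notI)
  fix b1' b2'
  assume "b1' \<in> ext_basis n ` S" "b2' \<in> ext_basis n ` S" "b1' \<noteq> b2'"
    and equiv: "equiv_nice (Suc n) (ext_br n br) b1' (ext_br n br) b2'"
  then obtain b1 b2 where "b1 \<in> S" "b2 \<in> S" "b1 \<noteq> b2" "b1' = ext_basis n b1" "b2' = ext_basis n b2"
    by blast
  moreover have "is_basis n b1" "is_basis n b2"
    using nice \<open>b1 \<in> S\<close> \<open>b2 \<in> S\<close> by (simp_all add: nice_basis_def)
  ultimately show False
    using equiv_nice_of_ext_equiv[OF lie] equiv inequiv by blast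
qed

lemma card_le_max_nice:
  assumes "is_lie_algebra n br" "nilpotent_lie n br" "finite S" "\<forall>b\<in>S. nice_basis n br b"
    "\<forall>b1\<in>S. \<forall>b2\<in>S. b1 \<noteq> b2 \<longrightarrow> \<not> equiv_nice n br b1 br b2"
  shows "enat (card S) \<le> max_nice n"
  unfolding max_nice_def using assms by (intro Sup_upper) blast

lemma max_nice_le_Suc: "max_nice n \<le> max_nice (Suc n)"
  unfolding max_nice_def[of n]
proof (rule Sup_least)
  fix e
  assume "e \<in> {enat (card S) | S br. is_lie_algebra n br \<and> nilpotent_lie n br \<and> finite S \<and>
      (\<forall>b\<in>S. nice_basis n br b) \<and> (\<forall>b1\<in>S. \<forall>b2\<in>S. b1 \<noteq> b2 \<longrightarrow> \<not> equiv_nice n br b1 br b2)}"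
  then obtain S br where e: "e = enat (card S)" and lie: "is_lie_algebra n br"
    and nilpotent: "nilpotent_lie n br" and "finite S" and nice: "\<forall>b\<in>S. nice_basis n br b"
    and inequiv: "\<forall>b1\<in>S. \<forall>b2\<in>S. b1 \<noteq> b2 \<longrightarrow> \<not> equiv_nice n br b1 br b2"
    by blast
  have "enat (card (ext_basis n ` S)) \<le> max_nice (Suc n)"
    using \<open>finite S\<close> nice ext_nice_basis[OF lie] ext_basis_pairwise_inequiv[OF lie nice inequiv]
    by (intro card_le_max_nice[OF ext_lie[OF lie] ext_nilpotent[OF lie nilpotent]]) auto
  then show "e \<le> max_nice (Suc n)"
    using e card_image[OF inj_on_ext_basis[OF inequiv]] by simp
qed


section \<open>Sums of copies of \<open>h\<^sub>3 \<oplus> h\<^sub>3\<close>\<close>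

lemma sum_lessThan_mult_block:
  fixes f :: "nat \<Rightarrow> real"
  assumes "m < k" "\<And>i. i div d \<noteq> m \<Longrightarrow> f i = 0"
  shows "(\<Sum>i<d * k. f i) = (\<Sum>r<d. f (d * m + r))"
proof -
  have "(\<Sum>i<d * k. f i) = (\<Sum>i\<in>(\<lambda>r. d * m + r) ` {..<d}. f i)"
  proof (rule sum.mono_neutral_right)
    show "(\<lambda>r. d * m + r) ` {..<d} \<subseteq> {..<d * k}"
    proof
      fix i
      assume "i \<in> (\<lambda>r. d * m + r) ` {..<d}"
      then obtain r where "r < d" "i = d * m + r"
        by blast
      moreover have "d * Suc m \<le> d * k"
        using \<open>m < k\<close> by (intro mult_le_mono2) simp
      ultimately show "i \<in> {..<d * k}"
        by simp
    qed
    show "\<forall>i\<in>{..<d * k} - (\<lambda>r. d * m + r) ` {..<d}. f i = 0"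
    proof
      fix i
      assume i: "i \<in> {..<d * k} - (\<lambda>r. d * m + r) ` {..<d}"
      have "i div d \<noteq> m"
      proof
        assume "i div d = m"
        moreover have "0 < d"
          using i by (cases d) auto
        ultimately have "i = d * m + i mod d" "i mod d < d"
          using div_mult_mod_eq[of i d] by (simp_all add: mult.commute)
        then show False
          using i by blast
      qed
      then show "f i = 0"
        by (rule assms(2))
    qed
  qed simp
  also have "\<dots> = (\<Sum>r<d. f (d * m + r))"
    by (subst sum.reindex) (auto simp: inj_on_def)
  finally show ?thesis .
qed

definition h3h3_br :: "(nat \<Rightarrow> real) \<Rightarrow> (nat \<Rightarrow> real) \<Rightarrow> nat \<Rightarrow> real" where
  "h3h3_br x y c =
     (if c = 4 then x 0 * y 1 - x 1 * y 0 else if c = 5 then x 2 * y 3 - x 3 * y 2 else 0)"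

definition block :: "nat \<Rightarrow> vec \<Rightarrow> nat \<Rightarrow> real" where
  "block m v r = v (6 * m + r)"

definition block_vec :: "nat \<Rightarrow> (nat \<Rightarrow> real) \<Rightarrow> vec" where
  "block_vec m u q = (if q div 6 = m then u (q mod 6) else 0)"

definition h3h3_sum_br :: "nat \<Rightarrow> vec \<Rightarrow> vec \<Rightarrow> vec" where
  "h3h3_sum_br k x y q =
     (if q < 6 * k then h3h3_br (block (q div 6) x) (block (q div 6) y) (q mod 6) else 0)"

lemma block_h3h3_sum_br_low: "r < 4 \<Longrightarrow> block m (h3h3_sum_br k v w) r = 0"
  by (simp add: block_def h3h3_sum_br_def h3h3_br_def)

lemma h3h3_sum_br_nested: "h3h3_sum_br k u (h3h3_sum_br k v w) = vzero"
  by (simp add: h3h3_sum_br_def[of k u] h3h3_br_def block_h3h3_sum_br_low fun_eq_iff)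

lemma h3h3_sum_lie: "is_lie_algebra (6 * k) (h3h3_sum_br k)"
  unfolding is_lie_algebra_def
  by (simp add: h3h3_sum_br_nested) (simp add: Vsp_def h3h3_sum_br_def h3h3_br_def block_def fun_eq_iff
      algebra_simps)

lemma h3h3_sum_nilpotent: "nilpotent_lie (6 * k) (h3h3_sum_br k)"
  unfolding nilpotent_lie_def
proof (intro exI[of _ 2] allI impI)
  fix ys :: "vec list" and x
  assume "length ys = 2"
  then obtain u v where "ys = [u, v]"
    by (metis length_0_conv length_Suc_conv numeral_2_eq_2)
  then show "nested_br (h3h3_sum_br k) ys x = vzero"
    by (simp only: nested_br.simps h3h3_sum_br_nested)
qed

lemma le_div_6: "6 * (k :: nat) \<le> q \<Longrightarrow> k \<le> q div 6"
  using div_le_mono[of "6 * k" q 6] by simp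

lemma block_vec_in_Vsp: "m < k \<Longrightarrow> block_vec m u \<in> Vsp (6 * k)"
  by (auto simp: Vsp_def block_vec_def dest: le_div_6)

lemma block_block_vec: "r < 6 \<Longrightarrow> block m' (block_vec m u) r = (if m' = m then u r else 0)"
  by (simp add: block_def block_vec_def)

lemma h3h3_sum_br_block_vec:
  assumes "m < k"
  shows "h3h3_sum_br k (block_vec m u) (block_vec m' u') =
    (if m = m' then block_vec m (h3h3_br u u') else vzero)"
  using assms by (auto simp: h3h3_sum_br_def block_block_vec h3h3_br_def fun_eq_iff block_vec_def
      dest: le_div_6)

text \<open>Row \<open>r\<close> of \<open>twisted\<close> is the \<open>r\<close>-th vector of the second nice basis of \<open>h\<^sub>3 \<oplus> h\<^sub>3\<close>:
  \<open>e\<^sub>0 + e\<^sub>2, e\<^sub>1 + e\<^sub>3, e\<^sub>0 - e\<^sub>2, e\<^sub>1 - e\<^sub>3, e\<^sub>4 + e\<^sub>5, e\<^sub>4 - e\<^sub>5\<close>. This matrix is symmetric with square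
  \<open>2 I\<close>, so half of it is its inverse.\<close>

definition twisted :: "nat \<Rightarrow> nat \<Rightarrow> real" where
  "twisted r c =
     (if r = 0 \<and> c = 0 \<or> r = 0 \<and> c = 2 \<or> r = 1 \<and> c = 1 \<or> r = 1 \<and> c = 3 \<or> r = 2 \<and> c = 0 \<or>
         r = 3 \<and> c = 1 \<or> r = 4 \<and> c = 4 \<or> r = 4 \<and> c = 5 \<or> r = 5 \<and> c = 4 then 1
      else if r = 2 \<and> c = 2 \<or> r = 3 \<and> c = 3 \<or> r = 5 \<and> c = 5 then -1 else 0)"

definition block_basis :: "bool \<Rightarrow> nat \<Rightarrow> nat \<Rightarrow> real" where
  "block_basis tw r c = (if tw then twisted r c else if r = c then 1 else 0)"

definition block_dual :: "bool \<Rightarrow> nat \<Rightarrow> nat \<Rightarrow> real" where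
  "block_dual tw r c = (if tw then twisted r c / 2 else if r = c then 1 else 0)"

text \<open>Structure constants of the block bases:
  \<open>[f\<^sub>r, f\<^sub>r\<^sub>'] = block_sc tw r r' \<cdot> f\<^bsub>block_target tw r r'\<^esub>\<close>.\<close>

definition block_sc :: "bool \<Rightarrow> nat \<Rightarrow> nat \<Rightarrow> real" where
  "block_sc tw r r' =
     (if r = 0 \<and> r' = 1 \<or> r = 2 \<and> r' = 3 \<or> tw \<and> (r = 0 \<and> r' = 3 \<or> r = 2 \<and> r' = 1) then 1
      else if r = 1 \<and> r' = 0 \<or> r = 3 \<and> r' = 2 \<or> tw \<and> (r = 3 \<and> r' = 0 \<or> r = 1 \<and> r' = 2) then -1
      else 0)"

definition block_target :: "bool \<Rightarrow> nat \<Rightarrow> nat \<Rightarrow> nat" where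
  "block_target tw r r' =
     (if tw then (if r = 0 \<and> r' = 1 \<or> r = 1 \<and> r' = 0 \<or> r = 2 \<and> r' = 3 \<or> r = 3 \<and> r' = 2 then 4 else 5)
      else (if r \<le> 1 then 4 else 5))"

lemma sum_lessThan_6: "(\<Sum>r<6. g r) = g (0 :: nat) + g 1 + g 2 + g 3 + g 4 + (g 5 :: real)"
  by (simp add: numeral_eq_Suc)

lemma block_dual_block_basis:
  "c < 6 \<Longrightarrow> (\<Sum>r<6. (\<Sum>c'<6. x c' * block_dual tw c' r) * block_basis tw r c) = x c"
  unfolding sum_lessThan_6
  by (cases tw) (auto simp: block_basis_def block_dual_def twisted_def less_Suc_eq numeral_eq_Suc)

lemma block_basis_block_dual:
  "r < 6 \<Longrightarrow> (\<Sum>c<6. (\<Sum>r'<6. y r' * block_basis tw r' c) * block_dual tw c r) = y r"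
  unfolding sum_lessThan_6
  by (cases tw) (auto simp: block_basis_def block_dual_def twisted_def less_Suc_eq numeral_eq_Suc,
      simp_all add: field_simps)

lemma h3h3_br_block_basis:
  "r < 6 \<Longrightarrow> r' < 6 \<Longrightarrow> c < 6 \<Longrightarrow>
    h3h3_br (block_basis tw r) (block_basis tw r') c =
      block_sc tw r r' * block_basis tw (block_target tw r r') c"
  by (cases tw) (auto simp: block_basis_def twisted_def h3h3_br_def block_sc_def block_target_def less_Suc_eq
      numeral_eq_Suc)

lemma block_sc_nonzero: "block_sc tw r r' \<noteq> 0 \<Longrightarrow> r < 4 \<and> r' < 4"
  by (auto simp: block_sc_def split: if_splits)

lemma block_target_inj:
  assumes "block_sc tw r r1 \<noteq> 0" "block_sc tw r r2 \<noteq> 0" "block_target tw r r1 = block_target tw r r2"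
  shows "r1 = r2"
proof -
  have "r < 4"
    using block_sc_nonzero assms(1) by blast
  then consider "r = 0" | "r = 1" | "r = 2" | "r = 3"
    by linarith
  then show ?thesis
    using assms unfolding block_sc_def block_target_def by cases (auto split: if_splits)
qed

lemma block_target_less: "block_target tw r r' < 6"
  by (simp add: block_target_def)

lemma block_sc_standard_imp_twisted: "block_sc False r r' \<noteq> 0 \<Longrightarrow> block_sc True r r' \<noteq> 0"
  by (auto simp: block_sc_def split: if_splits)

lemma block_sc_0_3: "block_sc True 0 3 = 1" "block_sc False 0 3 = 0"
  by (simp_all add: block_sc_def)

definition mixed_basis :: "nat \<Rightarrow> nat \<Rightarrow> vec" where
  "mixed_basis j i = block_vec (i div 6) (block_basis (i div 6 < j) (i mod 6))"

definition mixed_coords :: "nat \<Rightarrow> nat \<Rightarrow> vec \<Rightarrow> nat \<Rightarrow> real" where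
  "mixed_coords k j v i =
     (if i < 6 * k then (\<Sum>c<6. block (i div 6) v c * block_dual (i div 6 < j) c (i mod 6)) else 0)"

lemma block_index_less: "m < k \<Longrightarrow> r < 6 \<Longrightarrow> 6 * m + r < 6 * (k :: nat)"
  by linarith

lemma lin_comb_mixed_basis:
  assumes "q < 6 * k"
  shows "lin_comb (6 * k) (mixed_basis j) a q =
    (\<Sum>r<6. block (q div 6) a r * block_basis (q div 6 < j) r (q mod 6))"
proof -
  have "q div 6 < k"
    using assms by linarith
  then have "lin_comb (6 * k) (mixed_basis j) a q =
      (\<Sum>r<6. a (6 * (q div 6) + r) * mixed_basis j (6 * (q div 6) + r) q)"
    unfolding lin_comb_def by (rule sum_lessThan_mult_block) (simp add: mixed_basis_def block_vec_def)
  then show ?thesis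
    by (simp add: mixed_basis_def block_vec_def block_def)
qed

lemma mixed_basis_in_Vsp: "i < 6 * k \<Longrightarrow> mixed_basis j i \<in> Vsp (6 * k)"
  unfolding mixed_basis_def by (intro block_vec_in_Vsp) linarith

lemma lin_comb_mixed_coords:
  assumes "v \<in> Vsp (6 * k)"
  shows "lin_comb (6 * k) (mixed_basis j) (mixed_coords k j v) = v"
proof
  fix q
  show "lin_comb (6 * k) (mixed_basis j) (mixed_coords k j v) q = v q"
  proof (cases "q < 6 * k")
    case True
    then have "q div 6 < k"
      by linarith
    then have "block (q div 6) (mixed_coords k j v) r =
        (\<Sum>c<6. block (q div 6) v c * block_dual (q div 6 < j) c r)" if "r < 6" for r
      using that by (simp add: block_def mixed_coords_def block_index_less)
    with True show ?thesis
      by (simp add: lin_comb_mixed_basis block_dual_block_basis) (simp add: block_def)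
  next
    case False
    then show ?thesis
      using Vsp_vanishes[OF assms] Vsp_vanishes[OF lin_comb_in_Vsp[OF mixed_basis_in_Vsp]] by simp
  qed
qed

lemma mixed_coords_lin_comb:
  assumes "\<forall>i\<ge>6 * k. a i = 0"
  shows "mixed_coords k j (lin_comb (6 * k) (mixed_basis j) a) = a"
proof
  fix i
  have "block (i div 6) (lin_comb (6 * k) (mixed_basis j) a) c =
      (\<Sum>r<6. block (i div 6) a r * block_basis (i div 6 < j) r c)" if "i < 6 * k" "c < 6" for c
  proof -
    have "i div 6 < k"
      using that by linarith
    then show ?thesis
      using that lin_comb_mixed_basis[of "6 * (i div 6) + c" k j a]
      by (simp add: block_def block_index_less)
  qed
  then show "mixed_coords k j (lin_comb (6 * k) (mixed_basis j) a) i = a i"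
    using assms by (simp add: mixed_coords_def block_basis_block_dual) (simp add: block_def)
qed

lemma mixed_basis_is_basis: "is_basis (6 * k) (mixed_basis j)"
  by (rule is_basisI[where co = "mixed_coords k j"])
    (simp_all add: mixed_basis_in_Vsp lin_comb_mixed_coords mixed_coords_lin_comb mixed_coords_def)

definition mixed_sc :: "nat \<Rightarrow> nat \<Rightarrow> nat \<Rightarrow> real" where
  "mixed_sc j i l = (if i div 6 = l div 6 then block_sc (i div 6 < j) (i mod 6) (l mod 6) else 0)"

definition mixed_target :: "nat \<Rightarrow> nat \<Rightarrow> nat \<Rightarrow> nat" where
  "mixed_target j i l = 6 * (i div 6) + block_target (i div 6 < j) (i mod 6) (l mod 6)"

lemma mixed_target_less: "i < 6 * k \<Longrightarrow> mixed_target j i l < 6 * k"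
  unfolding mixed_target_def using block_target_less by (intro block_index_less) linarith+

lemma mixed_basis_bracket:
  assumes "i < 6 * k"
  shows "h3h3_sum_br k (mixed_basis j i) (mixed_basis j l) =
    vscale (mixed_sc j i l) (mixed_basis j (mixed_target j i l))"
proof -
  have "i div 6 < k"
    using assms by linarith
  show ?thesis
  proof (cases "i div 6 = l div 6")
    case True
    then have "h3h3_sum_br k (mixed_basis j i) (mixed_basis j l) =
        block_vec (i div 6)
          (h3h3_br (block_basis (i div 6 < j) (i mod 6)) (block_basis (i div 6 < j) (l mod 6)))"
      unfolding mixed_basis_def True[symmetric] by (simp add: h3h3_sum_br_block_vec[OF \<open>i div 6 < k\<close>])
    also have "\<dots> = vscale (mixed_sc j i l) (mixed_basis j (mixed_target j i l))"
      using True block_target_less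
      by (simp add: fun_eq_iff block_vec_def mixed_basis_def mixed_sc_def mixed_target_def
          h3h3_br_block_basis)
    finally show ?thesis .
  next
    case False
    then show ?thesis
      by (simp add: mixed_basis_def h3h3_sum_br_block_vec[OF \<open>i div 6 < k\<close>] mixed_sc_def fun_eq_iff)
  qed
qed

lemma mixed_basis_nice: "nice_basis (6 * k) (h3h3_sum_br k) (mixed_basis j)"
proof (rule nice_basis_from_structure_constants[OF h3h3_sum_lie mixed_basis_is_basis])
  show "mixed_target j i l < 6 * k \<and>
      h3h3_sum_br k (mixed_basis j i) (mixed_basis j l) =
        vscale (mixed_sc j i l) (mixed_basis j (mixed_target j i l))"
    if "i < 6 * k" for i l
    using that by (simp add: mixed_target_less mixed_basis_bracket)
  show "l = l'" if "mixed_sc j i l \<noteq> 0" "mixed_sc j i l' \<noteq> 0" "mixed_target j i l = mixed_target j i l'"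
    for i l l'
  proof -
    have l: "l div 6 = i div 6" and l': "l' div 6 = i div 6"
      using that(1,2) by (simp_all add: mixed_sc_def split: if_splits)
    have "block_sc (i div 6 < j) (i mod 6) (l mod 6) \<noteq> 0"
      "block_sc (i div 6 < j) (i mod 6) (l' mod 6) \<noteq> 0"
      using that(1,2) l l' by (simp_all add: mixed_sc_def)
    moreover have "block_target (i div 6 < j) (i mod 6) (l mod 6) =
        block_target (i div 6 < j) (i mod 6) (l' mod 6)"
      using that(3) by (simp add: mixed_target_def)
    ultimately have "l mod 6 = l' mod 6"
      by (rule block_target_inj)
    moreover have "l = 6 * (l div 6) + l mod 6" "l' = 6 * (l' div 6) + l' mod 6"
      by simp_all
    ultimately show ?thesis
      using l l' by simp
  qed
qed

lemma nonzero_brackets_mixed_basis: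
  "nonzero_brackets (6 * k) (h3h3_sum_br k) (mixed_basis j) =
    {p \<in> {..<6 * k} \<times> {..<6 * k}. mixed_sc j (fst p) (snd p) \<noteq> 0}"
  using basis_nonzero[OF mixed_basis_is_basis mixed_target_less]
  by (auto simp: nonzero_brackets_def mixed_basis_bracket vscale_eq_vzero_iff)

lemma card_nonzero_brackets_mixed_basis_less:
  assumes "j < j'" "j' \<le> k"
  shows "card (nonzero_brackets (6 * k) (h3h3_sum_br k) (mixed_basis j)) <
    card (nonzero_brackets (6 * k) (h3h3_sum_br k) (mixed_basis j'))"
proof -
  have "mixed_sc j' i l \<noteq> 0" if "mixed_sc j i l \<noteq> 0" for i l
    using that assms block_sc_standard_imp_twisted
    by (cases "i div 6 < j"; cases "i div 6 < j'") (auto simp: mixed_sc_def split: if_splits)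
  then have "nonzero_brackets (6 * k) (h3h3_sum_br k) (mixed_basis j) \<subseteq>
      nonzero_brackets (6 * k) (h3h3_sum_br k) (mixed_basis j')"
    unfolding nonzero_brackets_mixed_basis by auto
  moreover have "6 * j + 3 < 6 * k"
    using assms by linarith
  then have "(6 * j, 6 * j + 3) \<in> nonzero_brackets (6 * k) (h3h3_sum_br k) (mixed_basis j') -
      nonzero_brackets (6 * k) (h3h3_sum_br k) (mixed_basis j)"
    using assms block_sc_0_3 by (simp add: nonzero_brackets_mixed_basis mixed_sc_def)
  ultimately have "nonzero_brackets (6 * k) (h3h3_sum_br k) (mixed_basis j) \<subset>
      nonzero_brackets (6 * k) (h3h3_sum_br k) (mixed_basis j')"
    by blast
  then show ?thesis
    by (rule psubset_card_mono[rotated]) (simp add: nonzero_brackets_def)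
qed

lemma card_nonzero_brackets_mixed_basis_inj:
  assumes "j \<le> k" "j' \<le> k"
    and "card (nonzero_brackets (6 * k) (h3h3_sum_br k) (mixed_basis j)) =
      card (nonzero_brackets (6 * k) (h3h3_sum_br k) (mixed_basis j'))"
  shows "j = j'"
  using card_nonzero_brackets_mixed_basis_less[of j j' k] card_nonzero_brackets_mixed_basis_less[of j' j k]
    assms
  by (cases j j' rule: linorder_cases) auto

lemma max_nice_6k_lower_bound: "enat (k + 1) \<le> max_nice (6 * k)"
proof -
  have "inj_on mixed_basis {..k}"
    by (rule inj_onI) (simp add: card_nonzero_brackets_mixed_basis_inj)
  then have "card (mixed_basis ` {..k}) = k + 1"
    by (simp add: card_image)
  moreover have "enat (card (mixed_basis ` {..k})) \<le> max_nice (6 * k)"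
  proof (rule card_le_max_nice[OF h3h3_sum_lie h3h3_sum_nilpotent])
    show "\<forall>b1\<in>mixed_basis ` {..k}. \<forall>b2\<in>mixed_basis ` {..k}. b1 \<noteq> b2 \<longrightarrow>
        \<not> equiv_nice (6 * k) (h3h3_sum_br k) b1 (h3h3_sum_br k) b2"
    proof (intro ballI impI notI)
      fix b1 b2
      assume "b1 \<in> mixed_basis ` {..k}" "b2 \<in> mixed_basis ` {..k}" "b1 \<noteq> b2"
        and "equiv_nice (6 * k) (h3h3_sum_br k) b1 (h3h3_sum_br k) b2"
      then obtain j j' where "j \<le> k" "j' \<le> k" "j \<noteq> j'"
        and "equiv_nice (6 * k) (h3h3_sum_br k) (mixed_basis j) (h3h3_sum_br k) (mixed_basis j')"
        by auto
      then show False
        using card_nonzero_brackets_eq[OF h3h3_sum_lie mixed_basis_is_basis mixed_basis_is_basis]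
          card_nonzero_brackets_mixed_basis_inj by blast
    qed
  qed (simp_all add: mixed_basis_nice)
  ultimately show ?thesis
    by simp
qed

theorem mainTheorem1:
  shows "mono max_nice \<and> (\<forall>m::nat. \<exists>n. enat m < max_nice n) \<and>
         (\<forall>n. enat (n div 6 + 1) \<le> max_nice n)"
proof (intro conjI allI)
  show mono: "mono max_nice"
    unfolding mono_iff_le_Suc by (rule allI) (rule max_nice_le_Suc)
  fix n :: nat
  have "enat (n div 6 + 1) \<le> max_nice (6 * (n div 6))"
    by (rule max_nice_6k_lower_bound)
  also have "\<dots> \<le> max_nice n"
    by (rule monoD[OF mono]) simp
  finally show "enat (n div 6 + 1) \<le> max_nice n" .
next
  fix m :: nat
  have "enat m < enat (m + 1)"
    by simp
  also have "\<dots> \<le> max_nice (6 * m)"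
    by (rule max_nice_6k_lower_bound)
  finally show "\<exists>n. enat m < max_nice n"
    by blast
qed

end
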